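(* Let $$G(x,y;u)=1+\sum_{n\ge1}\Bigl(\sum_{\pi\in\mathfrak{S}_n}x^{\mathrm{des}(\pi)}y^{\mathrm{dez}(\pi)}\Bigr)u^n,\qquad F(t,s;u)=1+\sum_{n\geq 2}\Bigl(\sum_{\pi\in\mathcal{D}_n}t^{\mathrm{des}(\pi)}s^{\mathrm{xdes}(\pi)}\Bigr)u^n.$$ Then $$G(x,y;u)=\frac{1}{1-u}\times F\Bigl(\frac{xy}{1-u+xyu},\ \frac{(1-u+xu)(1-u+yu)}{1-u+xyu};\ u\bigl(1+\tfrac{xyu}{1-u}\bigr)\Bigr).$$
   Context: $\mathfrak{S}_n$ is the set of permutations of $[n]=\{1,\dots,n\}$ and $\mathcal{D}_n\subseteq\mathfrak{S}_n$ the set of derangements (no fixed points). For an integer word $w=w_1\cdots w_n$, $\mathrm{des}(w)=|\{i\in[n-1]:w_i>w_{i+1}\}|$. For $\pi\in\mathfrak{S}_n$, $\mathrm{dez}(\pi)=\mathrm{des}(w)$ where $w$ is obtained from $\pi_1\cdots\pi_n$ by replacing each fixed point value $\pi_i=i$ by $-1$ and then replacing every occurrence of the $j$-th smallest positive letter by $j$ for all $j$ (e.g. $\mathrm{dez}(41352)=\mathrm{des}(4\,1\,{-1}\,5\,2)=3$). An index $i$ is a crossing descent of $\pi$ if $\pi_i\ge i+1\ge\pi_{i+1}$, and $\mathrm{xdes}(\pi)$ is their number. *)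

theory Defs
  imports "HOL-Combinatorics.Permutations" "HOL-Computational_Algebra.Formal_Power_Series"
begin

definition perms :: "nat \<Rightarrow> (nat \<Rightarrow> nat) set" where
  "perms n = {\<pi>. \<pi> permutes {1..n}}"

definition derangements :: "nat \<Rightarrow> (nat \<Rightarrow> nat) set" where
  "derangements n = {\<pi> \<in> perms n. \<forall>i\<in>{1..n}. \<pi> i \<noteq> i}"

definition des_word :: "nat \<Rightarrow> (nat \<Rightarrow> int) \<Rightarrow> nat" where
  "des_word n w = card {i \<in> {1..n-1}. w i > w (Suc i)}"

definition des :: "nat \<Rightarrow> (nat \<Rightarrow> nat) \<Rightarrow> nat" where
  "des n \<pi> = des_word n (\<lambda>i. int (\<pi> i))"

text \<open>The word used for dez: fixed-point values replaced by -1, the remaining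
  (positive) letters replaced by their rank among the positive letters.\<close>
definition dez_word :: "nat \<Rightarrow> (nat \<Rightarrow> nat) \<Rightarrow> nat \<Rightarrow> int" where
  "dez_word n \<pi> i = (if \<pi> i = i then -1
     else int (card {v. v \<in> {\<pi> j |j. j \<in> {1..n} \<and> \<pi> j \<noteq> j} \<and> v \<le> \<pi> i}))"

definition dez :: "nat \<Rightarrow> (nat \<Rightarrow> nat) \<Rightarrow> nat" where
  "dez n \<pi> = des_word n (dez_word n \<pi>)"

definition xdes :: "nat \<Rightarrow> (nat \<Rightarrow> nat) \<Rightarrow> nat" where
  "xdes n \<pi> = card {i \<in> {1..n-1}. \<pi> i \<ge> i + 1 \<and> i + 1 \<ge> \<pi> (Suc i)}"

definition G_fps :: "real \<Rightarrow> real \<Rightarrow> real fps" where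
  "G_fps x y = Abs_fps (\<lambda>n. if n = 0 then 1
      else (\<Sum>\<pi>\<in>perms n. x ^ des n \<pi> * y ^ dez n \<pi>))"

definition F_coeff :: "nat \<Rightarrow> 'a::comm_ring_1 \<Rightarrow> 'a \<Rightarrow> 'a" where
  "F_coeff n t s = (if n = 0 then 1 else if n < 2 then 0
      else (\<Sum>\<pi>\<in>derangements n. t ^ des n \<pi> * s ^ xdes n \<pi>))"

text \<open>The formal power series \<Sum>_n a_n w^n for a sequence of power series a_n and
  a power series w with zero constant term (well-defined since w^n has order \<ge> n).\<close>
definition fps_series_subst :: "(nat \<Rightarrow> 'a::comm_ring_1 fps) \<Rightarrow> 'a fps \<Rightarrow> 'a fps" where
  "fps_series_subst a w = Abs_fps (\<lambda>k. \<Sum>n\<le>k. fps_nth (a n * w ^ n) k)"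

definition F_subst :: "real fps \<Rightarrow> real fps \<Rightarrow> real fps \<Rightarrow> real fps" where
  "F_subst t s w = fps_series_subst (\<lambda>n. F_coeff n t s) w"

end

theory Submission
  imports Defs
begin

text \<open>
  A permutation of [N] is determined by its set of non-fixed points, whose standardization is a
  derangement \<sigma> of [m], together with the numbers of fixed points lying in the m + 1 gaps
  around the non-fixed positions.  The descents of the permutation and of its dez word are then
  local: gap j contributes an amount depending only on \<sigma> near j and on whether the gap is
  empty.  Summing over the gap sizes turns each gap into a series a + b u/(1 - u), and the
  product of these series over the gaps of \<sigma> is
  (xy)^des(\<sigma>) ((1-u+xu)(1-u+yu))^xdes(\<sigma>) (1-u+xyu)^(m-des(\<sigma>)-xdes(\<sigma>)) / (1-u)^(m+1),
  because the excedance indicator j < \<sigma> j switches off exactly at the crossing descents of \<sigma>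
  and switches on one time fewer.  Up to the factor u^m, this is the summand of \<sigma> in the
  substituted F, multiplied by 1/(1 - u).
\<close>

unbundle fps_syntax

section \<open>Inflating a derangement by fixed points\<close>

lemma derangements_permutes: "\<sigma> \<in> derangements m \<Longrightarrow> \<sigma> permutes {1..m}"
  by (simp add: derangements_def perms_def)

lemma derangementsD: "\<sigma> \<in> derangements m \<Longrightarrow> j \<in> {1..m} \<Longrightarrow> \<sigma> j \<in> {1..m} \<and> \<sigma> j \<noteq> j"
  using permutes_in_image[OF derangements_permutes] by (auto simp: derangements_def)

text \<open>
  A multiset X over {0..m} places count X g fixed points right after the g-th non-fixed point
  (gap 0 lies before the first one); the j-th non-fixed point then sits at position
  inflate_pos X j.
\<close>

definition inflate_pos :: "nat multiset \<Rightarrow> nat \<Rightarrow> nat" where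
  "inflate_pos X j = j + (\<Sum>g<j. count X g)"

lemma inflate_pos_0 [simp]: "inflate_pos X 0 = 0"
  by (simp add: inflate_pos_def)

lemma inflate_pos_Suc: "inflate_pos X (Suc j) = Suc (inflate_pos X j + count X j)"
  by (simp add: inflate_pos_def)

lemma strict_mono_inflate_pos: "strict_mono (inflate_pos X)"
  by (simp add: strict_mono_Suc_iff inflate_pos_Suc)

lemmas inflate_pos_less_iff [simp] = strict_mono_less[OF strict_mono_inflate_pos]
lemmas inflate_pos_le_iff [simp] = strict_mono_less_eq[OF strict_mono_inflate_pos]
lemmas inflate_pos_eq_iff [simp] = strict_mono_eq[OF strict_mono_inflate_pos]

lemma le_inflate_pos: "j \<le> inflate_pos X j"
  by (simp add: inflate_pos_def)

lemma size_eq_sum_count: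
  assumes "finite A" "set_mset X \<subseteq> A"
  shows "size X = (\<Sum>a\<in>A. count X a)"
  unfolding size_multiset_overloaded_eq
  by (rule sum.mono_neutral_left) (use assms in \<open>auto simp: count_eq_zero_iff\<close>)

lemma inflate_pos_Suc_max:
  assumes "set_mset X \<subseteq> {..m}"
  shows "inflate_pos X (Suc m) = Suc (m + size X)"
  using size_eq_sum_count[OF _ assms] by (simp add: inflate_pos_def lessThan_Suc_atMost)

lemma not_in_range_inflate_pos:
  "inflate_pos X j < i \<Longrightarrow> i < inflate_pos X (Suc j) \<Longrightarrow> i \<notin> range (inflate_pos X)"
  by (auto simp: less_Suc_eq_le)

definition inflate :: "nat \<Rightarrow> nat multiset \<Rightarrow> (nat \<Rightarrow> nat) \<Rightarrow> nat \<Rightarrow> nat" where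
  "inflate m X \<sigma> i =
     (if i \<in> inflate_pos X ` {1..m} then inflate_pos X (\<sigma> (inv_into {1..m} (inflate_pos X) i)) else i)"

lemma inflate_at_pos: "j \<in> {1..m} \<Longrightarrow> inflate m X \<sigma> (inflate_pos X j) = inflate_pos X (\<sigma> j)"
  by (simp add: inflate_def inv_into_f_f inj_on_def)

lemma inflate_outside: "i \<notin> inflate_pos X ` {1..m} \<Longrightarrow> inflate m X \<sigma> i = i"
  by (simp add: inflate_def)

lemma bij_betw_inflate_pos: "bij_betw (inflate_pos X) {1..m} (inflate_pos X ` {1..m})"
  by (simp add: bij_betw_def inj_on_def)

section \<open>Descents gap by gap\<close>

definition des_at :: "nat \<Rightarrow> (nat \<Rightarrow> int) \<Rightarrow> nat \<Rightarrow> nat" where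
  "des_at n w i = of_bool (1 \<le> i \<and> i < n \<and> w (Suc i) < w i)"

lemma des_at_of_nat [simp]:
  "des_at n (\<lambda>i. int (f i)) i = of_bool (1 \<le> i \<and> i < n \<and> f (Suc i) < f i)"
  by (simp add: des_at_def)

lemma des_word_eq_sum_des_at:
  assumes "n \<le> K"
  shows "des_word n w = (\<Sum>i<K. des_at n w i)"
proof -
  have "{i \<in> {1..n-1}. w (Suc i) < w i} = {..<K} \<inter> {i. 1 \<le> i \<and> i < n \<and> w (Suc i) < w i}"
    using assms by auto
  then show ?thesis
    by (simp add: des_word_def des_at_def)
qed

lemma sum_lessThan_blocks:
  fixes g :: "nat \<Rightarrow> 'a::comm_monoid_add"
  assumes "mono f" "f 0 = 0"
  shows "(\<Sum>i<f n. g i) = (\<Sum>j<n. \<Sum>i\<in>{f j..<f (Suc j)}. g i)"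
proof (induction n)
  case (Suc n)
  have "(\<Sum>i<f (Suc n). g i) = (\<Sum>i<f n. g i) + (\<Sum>i\<in>{f n..<f (Suc n)}. g i)"
    using monoD[OF assms(1), of n "Suc n"]
    by (simp add: atLeast0LessThan[symmetric] sum.atLeastLessThan_concat)
  then show ?case
    using Suc by simp
qed (simp add: assms(2))

lemma sum_des_at_block:
  assumes "mono_on {Suc q..q + k} w"
  shows "(\<Sum>i\<in>{q..<Suc (q + k)}. des_at n w i) = des_at n w q + (if k = 0 then 0 else des_at n w (q + k))"
proof (cases k)
  case (Suc k')
  have "{q..<Suc (q + k)} = insert q (insert (q + k) {Suc q..<q + k})"
    using Suc by auto
  moreover have "des_at n w i = 0" if "i \<in> {Suc q..<q + k}" for i
    using that mono_onD[OF assms, of i "Suc i"] by (auto simp: des_at_def)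
  ultimately show ?thesis
    using Suc by simp
qed simp

text \<open>
  Descents of the inflated permutation (resp. of its dez word) at the j-th non-fixed point and
  at the k fixed points following it.  Only whether k = 0 matters.
\<close>

definition des_gap :: "nat \<Rightarrow> (nat \<Rightarrow> nat) \<Rightarrow> nat \<Rightarrow> nat \<Rightarrow> nat" where
  "des_gap m \<sigma> j k = (if k = 0 then of_bool (1 \<le> j \<and> j < m \<and> \<sigma> (Suc j) < \<sigma> j)
     else of_bool (1 \<le> j \<and> j < \<sigma> j) + of_bool (j < m \<and> \<sigma> (Suc j) < Suc j))"

definition dez_gap :: "nat \<Rightarrow> (nat \<Rightarrow> nat) \<Rightarrow> nat \<Rightarrow> nat \<Rightarrow> nat" where
  "dez_gap m \<sigma> j k = (if k = 0 then of_bool (1 \<le> j \<and> j < m \<and> \<sigma> (Suc j) < \<sigma> j)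
     else of_bool (1 \<le> j))"

locale inflation =
  fixes m :: nat and X :: "nat multiset" and \<sigma> :: "nat \<Rightarrow> nat"
  assumes derangement: "\<sigma> \<in> derangements m"
    and gaps: "set_mset X \<subseteq> {..m}"
begin

abbreviation "N \<equiv> m + size X"
abbreviation "p \<equiv> inflate_pos X"
abbreviation "\<pi> \<equiv> inflate m X \<sigma>"

lemmas \<sigma>_permutes = derangements_permutes[OF derangement]

lemma \<sigma>_mem: "j \<in> {1..m} \<Longrightarrow> \<sigma> j \<in> {1..m}"
  using derangementsD[OF derangement] by blast

lemma \<sigma>_ne: "j \<in> {1..m} \<Longrightarrow> \<sigma> j \<noteq> j"
  using derangementsD[OF derangement] by blast

lemma p_Suc_m: "p (Suc m) = Suc N"
  using inflate_pos_Suc_max[OF gaps] .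

lemma p_le_N: "j \<le> m \<Longrightarrow> p j \<le> N"
  using inflate_pos_less_iff[of X j "Suc m"] p_Suc_m by simp

lemma p_mem: "j \<in> {1..m} \<Longrightarrow> p j \<in> {1..N}"
  using le_inflate_pos[of j X] p_le_N by auto

lemma \<pi>_bij_betw: "bij_betw \<pi> (p ` {1..m}) (p ` {1..m})"
proof -
  have "bij_betw (p \<circ> \<sigma> \<circ> inv_into {1..m} p) (p ` {1..m}) (p ` {1..m})"
    using bij_betw_inflate_pos permutes_imp_bij[OF \<sigma>_permutes]
      bij_betw_inv_into[OF bij_betw_inflate_pos]
    by (blast intro: bij_betw_trans)
  then show ?thesis
    by (rule bij_betw_cong[THEN iffD1, rotated]) (simp add: inflate_def)
qed

lemma \<pi>_permutes: "\<pi> permutes {1..N}"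
proof (rule permutes_subset)
  show "\<pi> permutes p ` {1..m}"
    using \<pi>_bij_betw by (rule bij_imp_permutes) (rule inflate_outside)
  show "p ` {1..m} \<subseteq> {1..N}"
    using p_mem by blast
qed

lemma \<pi>_nonfixed: "{i \<in> {1..N}. \<pi> i \<noteq> i} = p ` {1..m}"
  using inflate_outside p_mem inflate_at_pos \<sigma>_ne by fastforce

lemma dez_word_at_pos: "j \<in> {1..m} \<Longrightarrow> dez_word N \<pi> (p j) = int (\<sigma> j)"
proof -
  assume j: "j \<in> {1..m}"
  have "{\<pi> i |i. i \<in> {1..N} \<and> \<pi> i \<noteq> i} = \<pi> ` p ` {1..m}"
    using \<pi>_nonfixed by blast
  also have "\<dots> = p ` {1..m}"
    using \<pi>_bij_betw by (simp add: bij_betw_def)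
  finally have "dez_word N \<pi> (p j) = int (card (p ` {1..\<sigma> j}))"
    using inflate_at_pos[OF j] \<sigma>_ne[OF j] \<sigma>_mem[OF j]
    by (auto simp: dez_word_def intro!: arg_cong[where f=card])
  then show ?thesis
    by (simp add: card_image inj_on_def)
qed

lemma dez_word_outside: "i \<notin> p ` {1..m} \<Longrightarrow> dez_word N \<pi> i = -1"
  by (simp add: dez_word_def inflate_outside)


lemma p_Suc: "p (Suc j) = Suc (p j + count X j)"
  by (rule inflate_pos_Suc)

lemma inside_gap:
  assumes "p j < i" "i \<le> p j + count X j"
  shows "i \<notin> p ` {1..m}"
proof -
  have "i < p (Suc j)"
    using assms(2) unfolding p_Suc by linarith
  then show ?thesis
    using not_in_range_inflate_pos[OF assms(1)] by blast
qed

lemma gap_end_eq_N: "p m + count X m = N"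
  using p_Suc_m p_Suc[of m] by simp

lemma gap_end_less_N: "j < m \<Longrightarrow> p j + count X j < N"
  using p_le_N[of "Suc j"] p_Suc[of j] by simp

lemma gap_end_le_N: "j \<le> m \<Longrightarrow> p j + count X j \<le> N"
  using gap_end_eq_N gap_end_less_N[of j] by (cases "j = m") auto

lemma \<pi>_after_gap: "j < m \<Longrightarrow> \<pi> (Suc (p j + count X j)) = p (\<sigma> (Suc j))"
  using inflate_at_pos[of "Suc j" m X \<sigma>] p_Suc[of j] by simp

lemma des_at_gap_start:
  assumes "j \<le> m"
  shows "des_at N (\<lambda>i. int (\<pi> i)) (p j) = (if count X j = 0
     then of_bool (1 \<le> j \<and> j < m \<and> \<sigma> (Suc j) < \<sigma> j) else of_bool (1 \<le> j \<and> j < \<sigma> j))"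
proof (cases "j = 0")
  case False
  then have j: "j \<in> {1..m}" and "1 \<le> p j"
    using assms le_inflate_pos[of j X] by auto
  have \<pi>_p: "\<pi> (p j) = p (\<sigma> j)"
    using inflate_at_pos[OF j] .
  show ?thesis
  proof (cases "count X j = 0")
    case True
    then show ?thesis
      using \<pi>_after_gap[of j] gap_end_less_N[of j] gap_end_eq_N \<open>1 \<le> p j\<close> \<pi>_p False assms
      by (cases "j = m") auto
  next
    case gap: False
    have "Suc (p j) \<notin> p ` {1..m}"
      using inside_gap[of j "Suc (p j)"] gap by simp
    then have "\<pi> (Suc (p j)) = Suc (p j)" and "p (\<sigma> j) \<noteq> Suc (p j)"
      using inflate_outside \<sigma>_mem[OF j] by (blast, metis image_eqI)
    then have "Suc (p j) < p (\<sigma> j) \<longleftrightarrow> j < \<sigma> j"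
      by (metis inflate_pos_less_iff Suc_lessD Suc_lessI)
    moreover have "p j < N"
      using gap_end_le_N[OF assms] gap by linarith
    ultimately show ?thesis
      using \<open>\<pi> (Suc (p j)) = Suc (p j)\<close> \<open>1 \<le> p j\<close> \<pi>_p gap False by auto
  qed
qed simp

lemma des_at_gap_end:
  assumes "j \<le> m" "count X j \<noteq> 0"
  shows "des_at N (\<lambda>i. int (\<pi> i)) (p j + count X j) = of_bool (j < m \<and> \<sigma> (Suc j) < Suc j)"
proof (cases "j < m")
  case True
  let ?i = "p j + count X j"
  have "?i \<notin> p ` {1..m}"
    using inside_gap[of j ?i] assms(2) by simp
  moreover have "\<sigma> (Suc j) \<in> {1..m}"
    using \<sigma>_mem True by simp
  ultimately have "\<pi> ?i = ?i" and "p (\<sigma> (Suc j)) \<noteq> ?i"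
    using inflate_outside by (blast, metis image_eqI)
  moreover have "p (\<sigma> (Suc j)) < Suc ?i \<longleftrightarrow> \<sigma> (Suc j) < Suc j"
    using p_Suc[of j] inflate_pos_less_iff by metis
  ultimately show ?thesis
    using \<pi>_after_gap[OF True] gap_end_less_N[OF True] assms(2) True by auto
next
  case False
  then show ?thesis
    using assms gap_end_eq_N by simp
qed

lemma \<pi>_mono_on_gap: "mono_on {Suc (p j)..p j + count X j} (\<lambda>i. int (\<pi> i))"
  using inside_gap[of j] inflate_outside by (intro mono_onI) auto

lemma des_gap_sum:
  assumes "j \<le> m"
  shows "(\<Sum>i\<in>{p j..<p (Suc j)}. des_at N (\<lambda>i. int (\<pi> i)) i) = des_gap m \<sigma> j (count X j)"
  unfolding p_Suc sum_des_at_block[OF \<pi>_mono_on_gap]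
  using des_at_gap_start[OF assms] des_at_gap_end[OF assms]
  by (cases "count X j = 0") (simp_all add: des_gap_def count_eq_zero_iff del: des_at_of_nat)


lemma dez_word_after_gap: "j < m \<Longrightarrow> dez_word N \<pi> (Suc (p j + count X j)) = int (\<sigma> (Suc j))"
  using dez_word_at_pos[of "Suc j"] p_Suc[of j] by simp

lemma dez_at_gap_start:
  assumes "j \<le> m"
  shows "des_at N (dez_word N \<pi>) (p j) = (if count X j = 0
     then of_bool (1 \<le> j \<and> j < m \<and> \<sigma> (Suc j) < \<sigma> j) else of_bool (1 \<le> j))"
proof (cases "j = 0")
  case False
  then have j: "j \<in> {1..m}" and "1 \<le> p j"
    using assms le_inflate_pos[of j X] by auto
  show ?thesis
  proof (cases "count X j = 0")
    case True
    then show ?thesis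
      using dez_word_after_gap[of j] gap_end_less_N[of j] gap_end_eq_N \<open>1 \<le> p j\<close>
        dez_word_at_pos[OF j] False assms
      by (cases "j = m") (auto simp: des_at_def)
  next
    case gap: False
    then have "dez_word N \<pi> (Suc (p j)) = -1"
      using inside_gap[of j "Suc (p j)"] dez_word_outside by simp
    moreover have "p j < N"
      using gap_end_le_N[OF assms] gap by linarith
    ultimately show ?thesis
      using dez_word_at_pos[OF j] \<open>1 \<le> p j\<close> gap False by (simp add: des_at_def)
  qed
qed (simp add: des_at_def)

lemma dez_at_gap_end:
  assumes "count X j \<noteq> 0"
  shows "des_at N (dez_word N \<pi>) (p j + count X j) = 0"
proof -
  have "dez_word N \<pi> (p j + count X j) = -1"
    using inside_gap[of j] dez_word_outside assms by simp
  then show ?thesis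
    by (simp add: des_at_def dez_word_def)
qed

lemma dez_mono_on_gap: "mono_on {Suc (p j)..p j + count X j} (dez_word N \<pi>)"
  using inside_gap[of j] dez_word_outside by (intro mono_onI) auto

lemma dez_gap_sum:
  assumes "j \<le> m"
  shows "(\<Sum>i\<in>{p j..<p (Suc j)}. des_at N (dez_word N \<pi>) i) = dez_gap m \<sigma> j (count X j)"
  unfolding p_Suc sum_des_at_block[OF dez_mono_on_gap]
  using dez_at_gap_start[OF assms] dez_at_gap_end
  by (cases "count X j = 0") (simp_all add: dez_gap_def count_eq_zero_iff)

lemma des_inflate: "des N \<pi> = (\<Sum>j\<le>m. des_gap m \<sigma> j (count X j))"
proof -
  have "des N \<pi> = (\<Sum>i<p (Suc m). des_at N (\<lambda>i. int (\<pi> i)) i)"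
    unfolding des_def p_Suc_m by (rule des_word_eq_sum_des_at) simp
  also have "\<dots> = (\<Sum>j<Suc m. \<Sum>i\<in>{p j..<p (Suc j)}. des_at N (\<lambda>i. int (\<pi> i)) i)"
    by (rule sum_lessThan_blocks) (simp_all add: strict_mono_mono strict_mono_inflate_pos)
  finally show ?thesis
    by (simp add: des_gap_sum lessThan_Suc_atMost del: des_at_of_nat)
qed

lemma dez_inflate: "dez N \<pi> = (\<Sum>j\<le>m. dez_gap m \<sigma> j (count X j))"
proof -
  have "dez N \<pi> = (\<Sum>i<p (Suc m). des_at N (dez_word N \<pi>) i)"
    unfolding dez_def p_Suc_m by (rule des_word_eq_sum_des_at) simp
  also have "\<dots> = (\<Sum>j<Suc m. \<Sum>i\<in>{p j..<p (Suc j)}. des_at N (dez_word N \<pi>) i)"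
    by (rule sum_lessThan_blocks) (simp_all add: strict_mono_mono strict_mono_inflate_pos)
  finally show ?thesis
    by (simp add: dez_gap_sum lessThan_Suc_atMost)
qed

end

section \<open>Every permutation is an inflated derangement\<close>

lemma strict_mono_eq_if_image_eq:
  fixes f g :: "nat \<Rightarrow> 'a::linorder"
  assumes "strict_mono f" "strict_mono g" "f ` {a..b} = g ` {a..b}" "j \<in> {a..b}"
  shows "f j = g j"
proof -
  have "sorted (map h [a..<Suc b])" if "strict_mono h" for h :: "nat \<Rightarrow> 'a"
    unfolding sorted_map by (rule sorted_wrt_mono_rel[OF _ sorted_upt]) (simp add: strict_mono_less_eq that)
  moreover have "distinct (map h [a..<Suc b])" if "strict_mono h" for h :: "nat \<Rightarrow> 'a"
    using that by (simp add: distinct_map strict_mono_imp_inj_on)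
  moreover have "set (map f [a..<Suc b]) = set (map g [a..<Suc b])"
    using assms(3) by (simp only: set_map set_upt atLeastLessThanSuc_atLeastAtMost)
  ultimately have "map f [a..<Suc b] = map g [a..<Suc b]"
    using assms(1,2) sorted_distinct_set_unique by metis
  then show ?thesis
    using assms(4) by (simp only: map_eq_conv set_upt atLeastLessThanSuc_atLeastAtMost)
qed

lemma inflate_pos_eqD:
  assumes "\<forall>j\<in>{1..m}. inflate_pos X j = inflate_pos Y j"
    and "set_mset X \<subseteq> {..m}" "set_mset Y \<subseteq> {..m}" "size X = size Y"
  shows "X = Y"
proof (rule multiset_eqI)
  have below_m: "count X g = count Y g" if "g < m" for g
    using assms(1) bspec[OF assms(1), of g] that inflate_pos_Suc[of X g] inflate_pos_Suc[of Y g]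
    by (cases g) auto
  then have "(\<Sum>g<m. count X g) = (\<Sum>g<m. count Y g)"
    by simp
  moreover have "size Z = (\<Sum>g<m. count Z g) + count Z m" if "set_mset Z \<subseteq> {..m}" for Z
    using size_eq_sum_count[OF _ that] by (simp flip: lessThan_Suc_atMost)
  ultimately have "count X m = count Y m"
    using assms(2-4) by fastforce
  moreover have "count X g = 0" "count Y g = 0" if "m < g" for g
    using assms(2,3) that by (auto simp: count_eq_zero_iff)
  ultimately show "count X g = count Y g" for g
    using below_m by (metis linorder_neqE_nat)
qed

lemma ex_inflate_pos_image:
  assumes "S \<subseteq> {1..N}"
  shows "\<exists>X. set_mset X \<subseteq> {..card S} \<and> size X = N - card S \<and> inflate_pos X ` {1..card S} = S"
  using assms
proof (induction N arbitrary: S)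
  case 0
  then show ?case
    by (intro exI[of _ "{#}"]) simp
next
  case (Suc N)
  show ?case
  proof (cases "Suc N \<in> S")
    case False
    then have sub: "S \<subseteq> {1..N}"
      using Suc.prems by (auto simp: le_Suc_eq)
    then have "card S \<le> N"
      using card_mono[OF _ sub] by simp
    obtain X where X: "set_mset X \<subseteq> {..card S}" "size X = N - card S" "inflate_pos X ` {1..card S} = S"
      using Suc.IH[OF sub] by blast
    have "inflate_pos (add_mset (card S) X) j = inflate_pos X j" if "j \<le> card S" for j
      unfolding inflate_pos_def using that by (intro arg_cong2[where f="(+)"] refl sum.cong) auto
    then have "inflate_pos (add_mset (card S) X) ` {1..card S} = inflate_pos X ` {1..card S}"
      by (intro image_cong) simp_all
    moreover have "size (add_mset (card S) X) = Suc N - card S"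
      using X(2) \<open>card S \<le> N\<close> by simp
    ultimately show ?thesis
      using X by (intro exI[of _ "add_mset (card S) X"]) simp
  next
    case True
    define S' where "S' = S - {Suc N}"
    have sub: "S' \<subseteq> {1..N}"
      using Suc.prems by (auto simp: S'_def le_Suc_eq)
    then have "card S' \<le> N" and card_S: "card S = Suc (card S')"
      using card_mono[of "{1..N}" S'] card_Suc_Diff1[of S "Suc N"] True
        finite_subset[OF Suc.prems] by (auto simp: S'_def)
    obtain X where X: "set_mset X \<subseteq> {..card S'}" "size X = N - card S'" "inflate_pos X ` {1..card S'} = S'"
      using Suc.IH[OF sub] by blast
    have "inflate_pos X (card S) = Suc N"
      using inflate_pos_Suc_max[OF X(1)] X(2) card_S \<open>card S' \<le> N\<close> by simp
    moreover have "{1..card S} = insert (card S) {1..card S'}"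
      using card_S by auto
    ultimately have "inflate_pos X ` {1..card S} = insert (Suc N) S'"
      using X(3) by simp
    also have "\<dots> = S"
      using True by (auto simp: S'_def)
    finally show ?thesis
      using X(1,2) card_S \<open>card S' \<le> N\<close> by (intro exI[of _ X]) auto
  qed
qed

lemma inflate_onto:
  assumes \<pi>: "\<pi> permutes {1..N}"
    and X: "inflate_pos X ` {1..m} = {i \<in> {1..N}. \<pi> i \<noteq> i}"
  shows "\<exists>\<sigma> \<in> derangements m. inflate m X \<sigma> = \<pi>"
proof -
  define p where "p = inflate_pos X"
  define S where "S = p ` {1..m}"
  have "\<pi> ` S \<subseteq> S"
    using X permutes_in_image[OF \<pi>] permutes_inj[OF \<pi>] by (auto simp: S_def p_def dest: injD)
  then have "\<pi> ` S = S"
    using endo_inj_surj[of S \<pi>] inj_on_subset[OF permutes_inj[OF \<pi>]] by (simp add: S_def)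
  then have "bij_betw \<pi> S S"
    using inj_on_subset[OF permutes_inj[OF \<pi>]] by (simp add: bij_betw_def)
  then have "bij_betw (inv_into {1..m} p \<circ> \<pi> \<circ> p) {1..m} {1..m}"
    using bij_betw_inflate_pos[of X m] bij_betw_inv_into[OF bij_betw_inflate_pos[of X m]]
    by (auto simp: S_def p_def intro: bij_betw_trans)
  define \<sigma> where "\<sigma> j = (if j \<in> {1..m} then inv_into {1..m} p (\<pi> (p j)) else j)" for j
  have "bij_betw \<sigma> {1..m} {1..m}"
    using \<open>bij_betw (inv_into {1..m} p \<circ> \<pi> \<circ> p) {1..m} {1..m}\<close>
    by (rule bij_betw_cong[THEN iffD1, rotated]) (simp add: \<sigma>_def)
  then have "\<sigma> permutes {1..m}"
    by (rule bij_imp_permutes) (auto simp: \<sigma>_def)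
  have \<pi>_p: "\<pi> (p j) = p (\<sigma> j)" if "j \<in> {1..m}" for j
  proof -
    have "\<pi> (p j) \<in> p ` {1..m}"
      using that \<open>\<pi> ` S = S\<close> unfolding S_def by blast
    then show ?thesis
      using that by (simp add: \<sigma>_def f_inv_into_f)
  qed
  have "\<sigma> \<in> derangements m"
    using \<open>\<sigma> permutes {1..m}\<close> \<pi>_p X by (fastforce simp: derangements_def perms_def p_def)
  moreover have "inflate m X \<sigma> i = \<pi> i" for i
  proof (cases "i \<in> S")
    case True
    then obtain j where "j \<in> {1..m}" "i = p j"
      by (auto simp: S_def)
    then show ?thesis
      using inflate_at_pos \<pi>_p by (simp add: p_def)
  next
    case False
    then show ?thesis
      using X inflate_outside permutes_not_in[OF \<pi>] by (fastforce simp: S_def p_def)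
  qed
  ultimately show ?thesis
    by blast
qed

definition inflation_data :: "nat \<Rightarrow> (nat \<times> (nat \<Rightarrow> nat) \<times> nat multiset) set" where
  "inflation_data N = (SIGMA m:{..N}. SIGMA \<sigma>:derangements m. multisets_of_size {..m} (N - m))"

lemma inflation_data_iff:
  "(m, \<sigma>, X) \<in> inflation_data N \<longleftrightarrow> inflation m X \<sigma> \<and> m + size X = N"
  by (auto simp: inflation_data_def inflation_def multisets_of_size_def)

lemma card_inflate_pos_image: "card (inflate_pos X ` {1..m}) = m"
  by (simp add: card_image strict_mono_imp_inj_on strict_mono_inflate_pos)

lemma inflate_inj:
  assumes I: "inflation m X \<sigma>" "inflation m' X' \<sigma>'"
    and N: "m + size X = N" "m' + size X' = N"
    and eq: "inflate m X \<sigma> = inflate m' X' \<sigma>'"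
  shows "m = m' \<and> \<sigma> = \<sigma>' \<and> X = X'"
proof -
  have "inflate_pos X ` {1..m} = {i \<in> {1..N}. inflate m X \<sigma> i \<noteq> i}"
    using inflation.\<pi>_nonfixed[OF I(1)] N(1) by simp
  also have "\<dots> = inflate_pos X' ` {1..m'}"
    using inflation.\<pi>_nonfixed[OF I(2)] N(2) eq by simp
  finally have image_eq: "inflate_pos X ` {1..m} = inflate_pos X' ` {1..m'}" .
  then have "m = m'"
    by (metis card_inflate_pos_image)
  have "X = X'"
  proof (rule inflate_pos_eqD)
    show "\<forall>j\<in>{1..m}. inflate_pos X j = inflate_pos X' j"
      using strict_mono_eq_if_image_eq[OF strict_mono_inflate_pos strict_mono_inflate_pos]
        image_eq \<open>m = m'\<close> by blast
    show "set_mset X \<subseteq> {..m}" "set_mset X' \<subseteq> {..m}" "size X = size X'"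
      using I N \<open>m = m'\<close> by (simp_all add: inflation_def)
  qed
  have "\<sigma> j = \<sigma>' j" for j
  proof (cases "j \<in> {1..m}")
    case True
    then show ?thesis
      using inflate_at_pos[of j m X \<sigma>] inflate_at_pos[of j m X \<sigma>'] eq \<open>X = X'\<close> \<open>m = m'\<close> by simp
  next
    case False
    then show ?thesis
      using permutes_not_in[OF inflation.\<sigma>_permutes[OF I(1)]]
        permutes_not_in[OF inflation.\<sigma>_permutes[OF I(2)]] \<open>m = m'\<close> by simp
  qed
  then show ?thesis
    using \<open>m = m'\<close> \<open>X = X'\<close> by auto
qed

lemma inj_on_inflate: "inj_on (\<lambda>(m, \<sigma>, X). inflate m X \<sigma>) (inflation_data N)"
  by (intro inj_onI) (auto simp: inflation_data_iff dest: inflate_inj)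

lemma bij_betw_inflate: "bij_betw (\<lambda>(m, \<sigma>, X). inflate m X \<sigma>) (inflation_data N) (perms N)"
proof (rule bij_betw_imageI[OF inj_on_inflate], intro equalityI subsetI)
  fix \<pi> assume "\<pi> \<in> (\<lambda>(m, \<sigma>, X). inflate m X \<sigma>) ` inflation_data N"
  then show "\<pi> \<in> perms N"
    using inflation.\<pi>_permutes by (auto simp: inflation_data_iff perms_def)
next
  fix \<pi> assume "\<pi> \<in> perms N"
  then have \<pi>: "\<pi> permutes {1..N}"
    by (simp add: perms_def)
  define S where "S = {i \<in> {1..N}. \<pi> i \<noteq> i}"
  have "S \<subseteq> {1..N}"
    by (auto simp: S_def)
  obtain X where X: "set_mset X \<subseteq> {..card S}" "size X = N - card S" "inflate_pos X ` {1..card S} = S"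
    using ex_inflate_pos_image[OF \<open>S \<subseteq> {1..N}\<close>] by blast
  obtain \<sigma> where "\<sigma> \<in> derangements (card S)" "inflate (card S) X \<sigma> = \<pi>"
    using inflate_onto[OF \<pi> X(3)[unfolded S_def]] unfolding S_def by blast
  moreover have "card S \<le> N"
    using card_mono[OF _ \<open>S \<subseteq> {1..N}\<close>] by simp
  ultimately show "\<pi> \<in> (\<lambda>(m, \<sigma>, X). inflate m X \<sigma>) ` inflation_data N"
    using X by (intro image_eqI[of _ _ "(card S, \<sigma>, X)"]) (auto simp: inflation_data_iff inflation_def)
qed

section \<open>The generating function of the gaps\<close>

definition fps_step :: "'a::zero \<Rightarrow> 'a \<Rightarrow> 'a fps" where
  "fps_step a b = Abs_fps (\<lambda>k. if k = 0 then a else b)"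

definition fps_lin :: "'a::comm_ring_1 \<Rightarrow> 'a fps" where
  "fps_lin c = 1 - fps_X + fps_const c * fps_X"

lemma fps_step_eq:
  fixes a b :: "'a::field"
  shows "fps_step a b = (fps_const a * (1 - fps_X) + fps_const b * fps_X) * inverse (1 - fps_X)"
proof -
  have "(1 - fps_X) * inverse (1 - fps_X :: 'a fps) = 1"
    by (rule inverse_mult_eq_1') simp
  then have "(fps_const a * (1 - fps_X) + fps_const b * fps_X) * inverse (1 - fps_X)
      = fps_const a + fps_const b * (fps_X * inverse (1 - fps_X))"
    by (simp only: distrib_right mult.assoc mult_1_right)
  then show ?thesis
    by (simp add: fps_eq_iff fps_step_def fps_inverse_one_minus_fps_X)
qed

lemma fps_lin_mult_inverse: "fps_lin c * inverse (1 - fps_X) = fps_step (1::'a::field) c"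
  by (simp add: fps_step_eq fps_lin_def algebra_simps)

lemma fps_const_mult_inverse: "fps_const c * inverse (1 - fps_X) = fps_step (c::'a::field) c"
  by (simp add: fps_step_eq algebra_simps)

lemma fps_const_mult_step: "fps_const c * fps_step a b = fps_step (c * a) (c * (b::'a::comm_ring_1))"
  by (simp add: fps_eq_iff fps_step_def fps_mult_left_const_nth)

definition gap_series :: "'a::comm_semiring_1 \<Rightarrow> 'a \<Rightarrow> nat \<Rightarrow> (nat \<Rightarrow> nat) \<Rightarrow> nat \<Rightarrow> 'a fps" where
  "gap_series x y m \<sigma> j = Abs_fps (\<lambda>k. x ^ des_gap m \<sigma> j k * y ^ dez_gap m \<sigma> j k)"

lemma gap_series_eq_step:
  "gap_series x y m \<sigma> j = fps_step (x ^ des_gap m \<sigma> j 0 * y ^ dez_gap m \<sigma> j 0)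
     (x ^ des_gap m \<sigma> j 1 * y ^ dez_gap m \<sigma> j 1)"
  by (simp add: fps_eq_iff gap_series_def fps_step_def des_gap_def dez_gap_def)

lemma gap_series_interior:
  fixes x y :: "'a::field"
  assumes "j \<in> {1..<m}" "\<sigma> j \<noteq> j" "\<sigma> (Suc j) \<noteq> Suc j"
  shows "gap_series x y m \<sigma> j = fps_const (x * y) ^ of_bool (\<sigma> (Suc j) < \<sigma> j)
    * fps_lin x ^ of_bool (j < \<sigma> j \<and> \<sigma> (Suc j) < Suc j)
    * fps_lin y ^ of_bool (\<sigma> j < j \<and> Suc j < \<sigma> (Suc j))
    * fps_lin (x * y) ^ of_bool (\<not> \<sigma> (Suc j) < \<sigma> j \<and> \<not> (\<sigma> j < j \<and> Suc j < \<sigma> (Suc j)))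
    * inverse (1 - fps_X)"
  using assms
  by (cases "\<sigma> (Suc j) < \<sigma> j"; cases "j < \<sigma> j"; cases "\<sigma> (Suc j) < Suc j";
      simp add: gap_series_eq_step des_gap_def dez_gap_def mult.assoc fps_lin_mult_inverse
        fps_const_mult_inverse fps_const_mult_step; simp add: mult_ac power2_eq_square)

lemma sum_falls_eq_sum_rises:
  fixes E :: "nat \<Rightarrow> bool"
  assumes "a \<le> b"
  shows "(\<Sum>j\<in>{a..<b}. of_bool (E j \<and> \<not> E (Suc j))) + of_bool (E b)
       = (\<Sum>j\<in>{a..<b}. of_bool (\<not> E j \<and> E (Suc j))) + (of_bool (E a) :: nat)"
  using assms
proof (induction b rule: dec_induct)
  case (step b)
  then show ?case
    by (cases "E b"; cases "E (Suc b)") (simp_all add: sum.atLeastLessThan_Suc)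
qed simp

lemma des_eq_sum: "des m \<sigma> = (\<Sum>j\<in>{1..<m}. of_bool (\<sigma> (Suc j) < \<sigma> j))"
proof -
  have "{i \<in> {1..m - 1}. int (\<sigma> (Suc i)) < int (\<sigma> i)} = {1..<m} \<inter> {j. \<sigma> (Suc j) < \<sigma> j}"
    by auto
  then show ?thesis
    by (simp add: des_def des_word_def)
qed

context
  fixes m :: nat and \<sigma> :: "nat \<Rightarrow> nat"
  assumes derangement: "\<sigma> \<in> derangements m"
begin

lemmas derangement_mem = derangementsD[OF derangement]

lemma derangement_adjacent: "1 \<le> j \<Longrightarrow> j < m \<Longrightarrow> \<sigma> j \<noteq> j \<and> \<sigma> (Suc j) \<noteq> Suc j"
  using derangement_mem[of j] derangement_mem[of "Suc j"] by simp

lemma xdes_eq_sum: "xdes m \<sigma> = (\<Sum>j\<in>{1..<m}. of_bool (j < \<sigma> j \<and> \<sigma> (Suc j) < Suc j))"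
proof -
  have "{i \<in> {1..m - 1}. i + 1 \<le> \<sigma> i \<and> \<sigma> (Suc i) \<le> i + 1}
      = {1..<m} \<inter> {j. j < \<sigma> j \<and> \<sigma> (Suc j) < Suc j}"
    using derangement_adjacent by fastforce
  then show ?thesis
    by (simp add: xdes_def)
qed

text \<open>
  The excedance indicator j < \<sigma> j holds at j = 1 and fails at j = m.  It switches off exactly
  at the crossing descents and switches on exactly at the positions counted on the right.
\<close>

lemma xdes_eq_Suc_sum_rises:
  assumes "1 \<le> m"
  shows "xdes m \<sigma> = Suc (\<Sum>j\<in>{1..<m}. of_bool (\<sigma> j < j \<and> Suc j < \<sigma> (Suc j)))"
proof -
  have "1 < \<sigma> 1" "\<sigma> m \<le> m"
    using derangement_mem[of 1] derangement_mem[of m] assms by auto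
  moreover have "(\<Sum>j\<in>{1..<m}. of_bool (j < \<sigma> j \<and> \<not> Suc j < \<sigma> (Suc j)))
      = (\<Sum>j\<in>{1..<m}. of_bool (j < \<sigma> j \<and> \<sigma> (Suc j) < Suc j) :: nat)"
    and "(\<Sum>j\<in>{1..<m}. of_bool (\<not> j < \<sigma> j \<and> Suc j < \<sigma> (Suc j)))
      = (\<Sum>j\<in>{1..<m}. of_bool (\<sigma> j < j \<and> Suc j < \<sigma> (Suc j)) :: nat)"
    using derangement_adjacent by (intro sum.cong refl; fastforce)+
  ultimately show ?thesis
    using sum_falls_eq_sum_rises[of 1 m "\<lambda>j. j < \<sigma> j"] assms
    by (simp add: xdes_eq_sum del: sum_of_bool_eq)
qed

lemma des_xdes_partition:
  assumes "1 \<le> m"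
  shows "des m \<sigma> + xdes m \<sigma> \<le> m"
    and "m - des m \<sigma> - xdes m \<sigma>
      = (\<Sum>j\<in>{1..<m}. of_bool (\<not> \<sigma> (Suc j) < \<sigma> j \<and> \<not> (\<sigma> j < j \<and> Suc j < \<sigma> (Suc j))))"
proof -
  have "of_bool (\<sigma> (Suc j) < \<sigma> j) + of_bool (\<sigma> j < j \<and> Suc j < \<sigma> (Suc j))
      + of_bool (\<not> \<sigma> (Suc j) < \<sigma> j \<and> \<not> (\<sigma> j < j \<and> Suc j < \<sigma> (Suc j))) = (1::nat)" for j
    by auto
  then have partition: "des m \<sigma> + (xdes m \<sigma> - 1)
      + (\<Sum>j\<in>{1..<m}. of_bool (\<not> \<sigma> (Suc j) < \<sigma> j \<and> \<not> (\<sigma> j < j \<and> Suc j < \<sigma> (Suc j)))) = m - 1"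
    unfolding des_eq_sum xdes_eq_Suc_sum_rises[OF assms] by (simp del: sum_of_bool_eq flip: sum.distrib)
  moreover have "1 \<le> xdes m \<sigma>"
    using xdes_eq_Suc_sum_rises[OF assms] by simp
  ultimately show "des m \<sigma> + xdes m \<sigma> \<le> m"
    using assms by linarith
  show "m - des m \<sigma> - xdes m \<sigma>
      = (\<Sum>j\<in>{1..<m}. of_bool (\<not> \<sigma> (Suc j) < \<sigma> j \<and> \<not> (\<sigma> j < j \<and> Suc j < \<sigma> (Suc j))))"
    using \<open>1 \<le> xdes m \<sigma>\<close> partition assms by linarith
qed

lemma gap_series_first: "gap_series x y m \<sigma> 0 = fps_step 1 1"
proof (cases "m = 0")
  case False
  then have "1 \<le> \<sigma> 1"
    using derangement_mem[of 1] by simp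
  then show ?thesis
    by (simp add: gap_series_eq_step des_gap_def dez_gap_def)
qed (simp add: gap_series_eq_step des_gap_def dez_gap_def)

lemma gap_series_last:
  assumes "1 \<le> m"
  shows "gap_series x y m \<sigma> m = fps_step 1 y"
proof -
  have "\<sigma> m \<le> m"
    using derangement_mem[of m] assms by simp
  then show ?thesis
    using assms by (simp add: gap_series_eq_step des_gap_def dez_gap_def)
qed

lemma prod_gap_series_interior:
  fixes x y :: "'a::field"
  assumes m: "1 \<le> m"
  shows "(\<Prod>j\<in>{1..<m}. gap_series x y m \<sigma> j) = fps_const (x * y) ^ des m \<sigma>
    * fps_lin x ^ xdes m \<sigma> * fps_lin y ^ (xdes m \<sigma> - 1)
    * fps_lin (x * y) ^ (m - des m \<sigma> - xdes m \<sigma>) * inverse (1 - fps_X) ^ (m - 1)"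
proof -
  define desc where "desc j = (\<sigma> (Suc j) < \<sigma> j)" for j
  define cross where "cross j = (j < \<sigma> j \<and> \<sigma> (Suc j) < Suc j)" for j
  define rise where "rise j = (\<sigma> j < j \<and> Suc j < \<sigma> (Suc j))" for j
  have "(\<Prod>j\<in>{1..<m}. gap_series x y m \<sigma> j) = (\<Prod>j\<in>{1..<m}. fps_const (x * y) ^ of_bool (desc j)
      * fps_lin x ^ of_bool (cross j) * fps_lin y ^ of_bool (rise j)
      * fps_lin (x * y) ^ of_bool (\<not> desc j \<and> \<not> rise j) * inverse (1 - fps_X))"
  proof (intro prod.cong refl)
    fix j assume "j \<in> {1..<m}"
    then show "gap_series x y m \<sigma> j = fps_const (x * y) ^ of_bool (desc j)
      * fps_lin x ^ of_bool (cross j) * fps_lin y ^ of_bool (rise j)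
      * fps_lin (x * y) ^ of_bool (\<not> desc j \<and> \<not> rise j) * inverse (1 - fps_X)"
      unfolding desc_def cross_def rise_def
      by (rule gap_series_interior) (use derangement_adjacent[of j] \<open>j \<in> {1..<m}\<close> in auto)
  qed
  also have "\<dots> = fps_const (x * y) ^ (\<Sum>j\<in>{1..<m}. of_bool (desc j))
      * fps_lin x ^ (\<Sum>j\<in>{1..<m}. of_bool (cross j)) * fps_lin y ^ (\<Sum>j\<in>{1..<m}. of_bool (rise j))
      * fps_lin (x * y) ^ (\<Sum>j\<in>{1..<m}. of_bool (\<not> desc j \<and> \<not> rise j))
      * inverse (1 - fps_X) ^ (m - 1)"
    by (simp add: prod.distrib power_sum del: sum_of_bool_eq)
  also have "\<dots> = fps_const (x * y) ^ des m \<sigma> * fps_lin x ^ xdes m \<sigma>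
      * fps_lin y ^ (xdes m \<sigma> - 1) * fps_lin (x * y) ^ (m - des m \<sigma> - xdes m \<sigma>)
      * inverse (1 - fps_X) ^ (m - 1)"
    using xdes_eq_Suc_sum_rises[OF m] des_xdes_partition(2)[OF m]
    by (simp add: des_eq_sum xdes_eq_sum desc_def cross_def rise_def del: sum_of_bool_eq)
  finally show ?thesis .
qed

lemma prod_gap_series:
  fixes x y :: "'a::field"
  shows "(\<Prod>j\<le>m. gap_series x y m \<sigma> j) = fps_const (x * y) ^ des m \<sigma>
    * (fps_lin x * fps_lin y) ^ xdes m \<sigma> * fps_lin (x * y) ^ (m - des m \<sigma> - xdes m \<sigma>)
    * inverse (1 - fps_X) ^ Suc m"
proof (cases "m = 0")
  case True
  then show ?thesis
    using gap_series_first[of x y] fps_const_mult_inverse[of "1::'a"]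
    by (simp add: des_def des_word_def xdes_def)
next
  case False
  then have m: "1 \<le> m" by simp
  have "{..m} = insert 0 (insert m {1..<m})"
    using m by auto
  moreover have "fps_step 1 1 = inverse (1 - fps_X :: 'a fps)"
    using fps_const_mult_inverse[of "1::'a"] by simp
  ultimately have prod_eq: "(\<Prod>j\<le>m. gap_series x y m \<sigma> j) = inverse (1 - fps_X)
      * (fps_lin y * inverse (1 - fps_X)) * (\<Prod>j\<in>{1..<m}. gap_series x y m \<sigma> j)"
    using m by (simp add: gap_series_first gap_series_last[OF m] fps_lin_mult_inverse)
  obtain k where "xdes m \<sigma> = Suc k"
    using xdes_eq_Suc_sum_rises[OF m] by blast
  moreover obtain m' where "m = Suc m'"
    using m by (cases m) auto
  ultimately show ?thesis
    unfolding prod_eq prod_gap_series_interior[OF m] by (simp add: power_mult_distrib mult_ac)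
qed

lemma des_plus_xdes_le: "des m \<sigma> + xdes m \<sigma> \<le> m"
proof (cases "m = 0")
  case True
  then show ?thesis
    by (simp add: des_eq_sum xdes_def)
qed (simp add: des_xdes_partition(1))

text \<open>
  As 1 + xyu/(1 - u) = (1 - u + xyu)/(1 - u), the powers of 1 - u + xyu in the denominators of
  the substituted t and s cancel against the m-th power of the substituted u; this needs
  des \<sigma> + xdes \<sigma> \<le> m.
\<close>

lemma substituted_summand_eq:
  fixes x y :: "'a::field"
  shows "inverse (1 - fps_X) * (fps_const (x * y) * inverse (fps_lin (x * y))) ^ des m \<sigma>
      * (fps_lin x * fps_lin y * inverse (fps_lin (x * y))) ^ xdes m \<sigma>
      * (fps_X * (1 + fps_const (x * y) * fps_X * inverse (1 - fps_X))) ^ m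
    = fps_X ^ m * (\<Prod>j\<le>m. gap_series x y m \<sigma> j)"
proof -
  define d where "d = des m \<sigma>"
  define c where "c = xdes m \<sigma>"
  define K where "K = fps_lin (x * y)"
  have KJ: "K * inverse K = 1"
    unfolding K_def by (rule inverse_mult_eq_1') (simp add: fps_lin_def)
  have "(1 - fps_X) * inverse (1 - fps_X :: 'a fps) = 1"
    by (rule inverse_mult_eq_1') simp
  then have W: "1 + fps_const (x * y) * fps_X * inverse (1 - fps_X) = K * inverse (1 - fps_X)"
    by (simp add: K_def fps_lin_def algebra_simps)
  have "K ^ m = K ^ (m - d - c) * K ^ (d + c)"
    using des_plus_xdes_le by (simp add: d_def c_def flip: power_add)
  then have "inverse (1 - fps_X) * (fps_const (x * y) * inverse K) ^ d
      * (fps_lin x * fps_lin y * inverse K) ^ c * (fps_X * (K * inverse (1 - fps_X))) ^ m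
    = fps_X ^ m * (fps_const (x * y) ^ d * (fps_lin x * fps_lin y) ^ c * K ^ (m - d - c)
      * inverse (1 - fps_X) ^ Suc m) * (K ^ (d + c) * inverse K ^ (d + c))"
    by (simp add: power_mult_distrib power_add mult_ac)
  also have "\<dots> = fps_X ^ m * (\<Prod>j\<le>m. gap_series x y m \<sigma> j)"
    using KJ by (simp add: prod_gap_series d_def c_def K_def flip: power_mult_distrib)
  finally show ?thesis
    unfolding W d_def c_def K_def .
qed

end

section \<open>Coefficient extraction\<close>

lemma fps_nth_mult_power_eq_0:
  assumes "w $ 0 = 0" "k < n"
  shows "(c * w ^ n) $ k = 0"
  using assms startsby_zero_power_prefix[OF assms(1)] by (simp add: fps_mult_nth)

lemma fps_nth_mult_series_subst:
  fixes g w :: "'a::comm_ring_1 fps"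
  assumes "w $ 0 = 0"
  shows "(g * fps_series_subst a w) $ N = (\<Sum>n\<le>N. (g * (a n * w ^ n)) $ N)"
proof -
  have subst_nth: "fps_series_subst a w $ k = (\<Sum>n\<le>N. (a n * w ^ n) $ k)" if "k \<le> N" for k
    unfolding fps_series_subst_def using that fps_nth_mult_power_eq_0[OF assms]
    by (simp, intro sum.mono_neutral_left) auto
  have "(g * fps_series_subst a w) $ N = (\<Sum>i=0..N. \<Sum>n\<le>N. g $ i * (a n * w ^ n) $ (N - i))"
    by (simp add: fps_mult_nth subst_nth sum_distrib_left)
  also have "\<dots> = (\<Sum>n\<le>N. (g * (a n * w ^ n)) $ N)"
    by (subst sum.swap) (simp add: fps_mult_nth)
  finally show ?thesis .
qed

lemma finite_derangements: "finite (derangements m)"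
  using finite_permutations[of "{1..m}"] by (rule finite_subset[rotated]) (auto simp: derangements_def perms_def)

lemma F_coeff_eq_sum: "F_coeff n t s = (\<Sum>\<sigma>\<in>derangements n. t ^ des n \<sigma> * s ^ xdes n \<sigma>)"
proof -
  have "derangements 0 = {id}"
    by (auto simp: derangements_def perms_def)
  moreover have "derangements 1 = {}"
    using permutes_in_image[of _ "{1..1}" 1] by (auto simp: derangements_def perms_def)
  ultimately show ?thesis
    by (cases "n \<le> 1") (auto simp: F_coeff_def le_Suc_eq des_def des_word_def xdes_def)
qed

lemma G_fps_nth: "G_fps x y $ N = (\<Sum>\<pi>\<in>perms N. x ^ des N \<pi> * y ^ dez N \<pi>)"
proof -
  have "perms 0 = {id}"
    by (auto simp: perms_def)
  then show ?thesis
    using des_word_eq_sum_des_at[of 0 0] by (simp add: G_fps_def des_def dez_def)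
qed

lemma sum_inflation_data:
  "(\<Sum>t\<in>inflation_data N. f t)
    = (\<Sum>m\<le>N. \<Sum>\<sigma>\<in>derangements m. \<Sum>X\<in>multisets_of_size {..m} (N - m). f (m, \<sigma>, X))"
  unfolding inflation_data_def
  by (subst sum.Sigma; auto simp: finite_derangements intro!: sum.cong finite_SigmaI)+

lemma nth_prod_gap_series:
  fixes x y :: "'a::field"
  assumes "\<sigma> \<in> derangements m"
  shows "(\<Prod>j\<le>m. gap_series x y m \<sigma> j) $ k = (\<Sum>X\<in>multisets_of_size {..m} k.
    x ^ des (m + k) (inflate m X \<sigma>) * y ^ dez (m + k) (inflate m X \<sigma>))"
proof -
  have "x ^ des (m + k) (inflate m X \<sigma>) * y ^ dez (m + k) (inflate m X \<sigma>)
      = (\<Prod>j\<le>m. gap_series x y m \<sigma> j $ count X j)"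
    if "X \<in> multisets_of_size {..m} k" for X
  proof -
    interpret inflation m X \<sigma>
      using assms that by (simp add: inflation_def multisets_of_size_def)
    have "k = size X"
      using that by (simp add: multisets_of_size_def)
    then show ?thesis
      by (simp add: des_inflate dez_inflate gap_series_def power_sum prod.distrib)
  qed
  then show ?thesis
    by (simp add: fps_prod_nth')
qed

lemma sum_perms_eq_sum_derangements:
  fixes x y :: "'a::field"
  shows "(\<Sum>\<pi>\<in>perms N. x ^ des N \<pi> * y ^ dez N \<pi>)
    = (\<Sum>m\<le>N. \<Sum>\<sigma>\<in>derangements m. (\<Prod>j\<le>m. gap_series x y m \<sigma> j) $ (N - m))"
proof -
  define w where "w \<pi> = x ^ des N \<pi> * y ^ dez N \<pi>" for \<pi>
  have "(\<Sum>\<pi>\<in>perms N. x ^ des N \<pi> * y ^ dez N \<pi>)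
      = (\<Sum>t\<in>inflation_data N. w (case t of (m, \<sigma>, X) \<Rightarrow> inflate m X \<sigma>))"
    unfolding w_def[symmetric] by (rule sum.reindex_bij_betw[OF bij_betw_inflate, symmetric])
  also have "\<dots> = (\<Sum>m\<le>N. \<Sum>\<sigma>\<in>derangements m. (\<Prod>j\<le>m. gap_series x y m \<sigma> j) $ (N - m))"
    by (simp add: sum_inflation_data nth_prod_gap_series w_def)
  finally show ?thesis .
qed

lemma nth_F_substitution:
  fixes x y :: "'a::field"
  shows "(inverse (1 - fps_X) * fps_series_subst
      (\<lambda>n. F_coeff n (fps_const (x * y) * inverse (fps_lin (x * y)))
         (fps_lin x * fps_lin y * inverse (fps_lin (x * y))))
      (fps_X * (1 + fps_const (x * y) * fps_X * inverse (1 - fps_X)))) $ N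
    = (\<Sum>m\<le>N. \<Sum>\<sigma>\<in>derangements m. (\<Prod>j\<le>m. gap_series x y m \<sigma> j) $ (N - m))"
proof -
  define T where "T = fps_const (x * y) * inverse (fps_lin (x * y))"
  define S where "S = fps_lin x * fps_lin y * inverse (fps_lin (x * y))"
  define W where "W = fps_X * (1 + fps_const (x * y) * fps_X * inverse (1 - fps_X :: 'a fps))"
  have "inverse (1 - fps_X) * (F_coeff m T S * W ^ m)
      = (\<Sum>\<sigma>\<in>derangements m. fps_X ^ m * (\<Prod>j\<le>m. gap_series x y m \<sigma> j))" for m
    unfolding F_coeff_eq_sum sum_distrib_left sum_distrib_right T_def S_def W_def
    by (intro sum.cong refl) (simp add: substituted_summand_eq flip: mult.assoc)
  then have "(inverse (1 - fps_X) * fps_series_subst (\<lambda>n. F_coeff n T S) W) $ N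
      = (\<Sum>m\<le>N. (\<Sum>\<sigma>\<in>derangements m. fps_X ^ m * (\<Prod>j\<le>m. gap_series x y m \<sigma> j)) $ N)"
    by (simp add: fps_nth_mult_series_subst W_def)
  also have "\<dots> = (\<Sum>m\<le>N. \<Sum>\<sigma>\<in>derangements m. (\<Prod>j\<le>m. gap_series x y m \<sigma> j) $ (N - m))"
    by (simp add: fps_sum_nth fps_X_power_mult_nth)
  finally show ?thesis
    by (simp add: T_def S_def W_def)
qed

theorem theorem3p2:
  fixes x y :: real
  defines "u \<equiv> (fps_X :: real fps)"
  shows "G_fps x y =
    inverse (1 - u) *
    F_subst (fps_const (x * y) * inverse (1 - u + fps_const (x * y) * u))
            ((1 - u + fps_const x * u) * (1 - u + fps_const y * u)
               * inverse (1 - u + fps_const (x * y) * u))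
            (u * (1 + fps_const (x * y) * u * inverse (1 - u)))"
  unfolding fps_eq_iff G_fps_nth sum_perms_eq_sum_derangements nth_F_substitution[symmetric]
  by (simp add: u_def F_subst_def fps_lin_def)

end
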